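(* Let $\ell,n\in\mathbb{Z}_{\ge0}$ with $\ell\ge n$ and let $1\le k<n$. There is a family of skew polynomials $\{g_{\underline e,k+1}\in\mathrm{SkPol}_{k+1}\mid \underline e=(e_k,\dots,e_1)\in\{0,1\}^k\}$ such that (1) each $g_{\underline e,k+1}$ is a polynomial in $t_{k+1}$ of degree $\ell-k+\ell(\underline e)$ whose leading coefficient is invertible and whose other coefficients lie in $\mathrm{SkPol}_k$; and (2) $\sum_{\underline e}g_{\underline e,k+1}\,\tau_{\underline{S_k}^{\underline e}}=0$ in $\mathrm{ONH}_n^\ell$ (where $g_{\underline e,k+1}$ acts by substituting $x_j$ for $t_j$).
   Context: $\mathbf{k}$ is a field of characteristic $\neq2$. $\mathrm{ONH}_n$ is the unital $\mathbf{k}$-algebra with generators $\tau_1,\dots,\tau_{n-1},x_1,\dots,x_n$ and relations $\tau_i^2=0$; $\tau_i\tau_{i+1}\tau_i=\tau_{i+1}\tau_i\tau_{i+1}$; $x_i\tau_i+\tau_ix_{i+1}=1$; $\tau_ix_i+x_{i+1}\tau_i=1$; $x_ix_j+x_jx_i=0$ ($i\ne j$); $\tau_i\tau_j+\tau_j\tau_i=0$ ($|i-j|>1$); $x_i\tau_j+\tau_jx_i=0$ ($i\ne j,j+1$). $\mathrm{ONH}_n^\ell$ is its quotient by the two-sided ideal generated by $x_1^\ell$. $\mathrm{SkPol}_a=\mathbb{Z}\langle t_1,\dots,t_a\rangle/(t_it_j+t_jt_i,\ i\ne j)$, with $\mathrm{SkPol}_a\subset\mathrm{SkPol}_{a+1}$;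 it acts on $\mathrm{ONH}_n^\ell$ by multiplication after substituting $x_j$ for $t_j$. For $\underline e=(e_k,\dots,e_1)\in\{0,1\}^k$, $\ell(\underline e)=\sum_ie_i$ and $\tau_{\underline{S_k}^{\underline e}}=\tau_{s_k^{e_k}}\tau_{s_{k-1}^{e_{k-1}}}\cdots\tau_{s_1^{e_1}}$, where $\tau_{s_j^1}=\tau_j$ and $\tau_{s_j^0}=1$. *)

theory Defs
  imports Main
begin

text \<open>Free (noncommutative) algebra over a coefficient ring 'r on an alphabet 'a:
  an element is a coefficient function on words. Elements of interest have
  finite support; the product is the concatenation (Cauchy) product.\<close>

type_synonym ('a, 'r) fa = "'a list \<Rightarrow> 'r"

definition fa_zero :: "('a, 'r::zero) fa" where
  "fa_zero = (\<lambda>_. 0)"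

definition fa_word :: "'a list \<Rightarrow> ('a, 'r::{zero,one}) fa" where
  "fa_word u = (\<lambda>w. if w = u then 1 else 0)"

definition fa_one :: "('a, 'r::{zero,one}) fa" where
  "fa_one = fa_word []"

definition fa_add :: "('a, 'r::plus) fa \<Rightarrow> ('a, 'r) fa \<Rightarrow> ('a, 'r) fa" where
  "fa_add p q = (\<lambda>w. p w + q w)"

definition fa_diff :: "('a, 'r::minus) fa \<Rightarrow> ('a, 'r) fa \<Rightarrow> ('a, 'r) fa" where
  "fa_diff p q = (\<lambda>w. p w - q w)"

definition fa_smul :: "'r::times \<Rightarrow> ('a, 'r) fa \<Rightarrow> ('a, 'r) fa" where
  "fa_smul c p = (\<lambda>w. c * p w)"

definition fa_mul :: "('a, 'r::comm_semiring_0) fa \<Rightarrow> ('a, 'r) fa \<Rightarrow> ('a, 'r) fa" where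
  "fa_mul p q = (\<lambda>w. \<Sum>i\<le>length w. p (take i w) * q (drop i w))"

definition fa_sum :: "'i set \<Rightarrow> ('i \<Rightarrow> ('a, 'r::comm_monoid_add) fa) \<Rightarrow> ('a, 'r) fa" where
  "fa_sum A f = (\<lambda>w. \<Sum>i\<in>A. f i w)"

definition fa_pow :: "('a, 'r::comm_semiring_1) fa \<Rightarrow> nat \<Rightarrow> ('a, 'r) fa" where
  "fa_pow p m = ((fa_mul p) ^^ m) fa_one"

definition fa_over :: "'a set \<Rightarrow> ('a, 'r::zero) fa \<Rightarrow> bool" where
  "fa_over S p \<longleftrightarrow> finite {w. p w \<noteq> 0} \<and> (\<forall>w. p w \<noteq> 0 \<longrightarrow> set w \<subseteq> S)"

inductive_set fa_ideal :: "('a, 'r::comm_ring_1) fa set \<Rightarrow> ('a, 'r) fa set"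
  for R :: "('a, 'r) fa set" where
  zero: "fa_zero \<in> fa_ideal R"
| add: "p \<in> fa_ideal R \<Longrightarrow> q \<in> fa_ideal R \<Longrightarrow> fa_add p q \<in> fa_ideal R"
| gen: "r \<in> R \<Longrightarrow> fa_smul c (fa_mul (fa_mul (fa_word u) r) (fa_word v)) \<in> fa_ideal R"

section \<open>The cyclotomic odd nilHecke algebra ONH_n^l\<close>

datatype onh_gen = Tau nat | X nat

definition onh_rels :: "nat \<Rightarrow> nat \<Rightarrow> (onh_gen, 'k::field) fa set" where
  "onh_rels n l =
     {fa_word [Tau i, Tau i] | i. 1 \<le> i \<and> i < n}
   \<union> {fa_diff (fa_word [Tau i, Tau (i+1), Tau i]) (fa_word [Tau (i+1), Tau i, Tau (i+1)])
       | i. 1 \<le> i \<and> i + 1 < n}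
   \<union> {fa_diff (fa_add (fa_word [X i, Tau i]) (fa_word [Tau i, X (i+1)])) fa_one
       | i. 1 \<le> i \<and> i < n}
   \<union> {fa_diff (fa_add (fa_word [Tau i, X i]) (fa_word [X (i+1), Tau i])) fa_one
       | i. 1 \<le> i \<and> i < n}
   \<union> {fa_add (fa_word [X i, X j]) (fa_word [X j, X i])
       | i j. 1 \<le> i \<and> i \<le> n \<and> 1 \<le> j \<and> j \<le> n \<and> i \<noteq> j}
   \<union> {fa_add (fa_word [Tau i, Tau j]) (fa_word [Tau j, Tau i])
       | i j. 1 \<le> i \<and> i < n \<and> 1 \<le> j \<and> j < n \<and> (i + 1 < j \<or> j + 1 < i)}
   \<union> {fa_add (fa_word [X i, Tau j]) (fa_word [Tau j, X i])
       | i j. 1 \<le> i \<and> i \<le> n \<and> 1 \<le> j \<and> j < n \<and> i \<noteq> j \<and> i \<noteq> j + 1}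
   \<union> {fa_word (replicate l (X 1))}"

definition onhl_zero :: "nat \<Rightarrow> nat \<Rightarrow> (onh_gen, 'k::field) fa \<Rightarrow> bool" where
  "onhl_zero n l p \<longleftrightarrow> p \<in> fa_ideal (onh_rels n l)"

section \<open>Skew polynomials over the integers (letter j stands for t_j)\<close>

definition skpol_rels :: "(nat, int) fa set" where
  "skpol_rels = {fa_add (fa_word [i, j]) (fa_word [j, i]) | i j. 1 \<le> i \<and> 1 \<le> j \<and> i \<noteq> j}"

definition skpol_eq :: "(nat, int) fa \<Rightarrow> (nat, int) fa \<Rightarrow> bool" where
  "skpol_eq p q \<longleftrightarrow> fa_diff p q \<in> fa_ideal skpol_rels"

definition skpol :: "nat \<Rightarrow> (nat, int) fa \<Rightarrow> bool" where
  "skpol a p \<longleftrightarrow> fa_over {1..a} p"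

definition subst_x :: "(nat, int) fa \<Rightarrow> (onh_gen, 'k::ring_1) fa" where
  "subst_x p = (\<lambda>w. if (\<exists>v. w = map X v) then of_int (p (THE v. w = map X v)) else 0)"

text \<open>For e = [e_k, ..., e_1] (so e ! p = e_(k-p)), the word
  tau_(s_k^e_k) ... tau_(s_1^e_1).\<close>
definition tau_word :: "nat \<Rightarrow> bool list \<Rightarrow> (onh_gen, 'k::{zero,one}) fa" where
  "tau_word k e = fa_word (concat (map (\<lambda>p. if e ! p then [Tau (k - p)] else []) [0..<k]))"

definition len_e :: "bool list \<Rightarrow> nat" where
  "len_e e = length (filter id e)"

end

theory Submission
  imports Defs "HOL-Library.Function_Algebras"
begin

text \<open>Write \<open>\<tau>\<^sub>S\<close> (\<open>tau_list k S\<close>) for the product of the \<open>\<tau>\<^sub>i\<close>, \<open>i \<in> S\<close>, in decreasing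
  order of \<open>i\<close>, and \<open>m(S)\<close> (\<open>first_gap S\<close>) for the least positive integer not in \<open>S\<close>.
  Pushing \<open>x\<^sub>1\<close> to the left through \<open>\<tau>\<^sub>S\<close> gives
  \<open>\<tau>\<^sub>S x\<^sub>1 = (-1)\<^bsup>|S|\<^esup> x\<^bsub>m(S)\<^esub> \<tau>\<^sub>S + \<Sum>\<^bsub>j < m(S)\<^esub> (-1)\<^bsup>j-1\<^esup> \<tau>\<^bsub>S - {j}\<^esub>\<close>.
  Iterating this, and moving \<open>x\<^bsub>m(S)\<^esub>\<close> further left past the powers of \<open>x\<^sub>k\<^sub>+\<^sub>1\<close>, one finds
  \<open>\<tau>\<^sub>k \<cdots> \<tau>\<^sub>1 x\<^sub>1\<^sup>r = \<Sum>\<^bsub>S \<subseteq> {1..k}\<^esub> P\<^bsub>r,S\<^esub> \<tau>\<^sub>S\<close> in \<open>ONH\<^sub>n\<close>, where \<open>P\<^bsub>r,S\<^esub>\<close> is a polynomial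
  in \<open>t\<^sub>k\<^sub>+\<^sub>1\<close> with coefficients in \<open>SkPol\<^sub>k\<close>. An induction on \<open>r\<close> shows that \<open>P\<^bsub>r,S\<^esub>\<close> has
  degree \<open>r - k + |S|\<close> and leading coefficient \<open>\<plusminus>1\<close>. For \<open>r = \<ell>\<close> the left-hand side vanishes in
  \<open>ONH\<^sub>n\<^sup>\<ell>\<close> since \<open>x\<^sub>1\<^sup>\<ell> = 0\<close>, so \<open>g\<^bsub>e,k+1\<^esub> = P\<^bsub>\<ell>,S\<^esub>\<close>, with \<open>S\<close> the support of \<open>e\<close>, is
  the required family.\<close>

section \<open>Arithmetic in the free algebra\<close>

lemma fa_add_eq_plus: "fa_add p q = p + q"
  by (simp add: fa_add_def fun_eq_iff)

lemma fa_diff_eq_minus: "fa_diff p q = p - q"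
  by (simp add: fa_diff_def fun_eq_iff)

lemma fa_zero_eq_0: "fa_zero = 0"
  by (simp add: fa_zero_def fun_eq_iff)

lemma sum_fun_apply: "(\<Sum>i\<in>A. f i) w = (\<Sum>i\<in>A. f i w)"
  by (induction A rule: infinite_finite_induct) auto

lemma fa_sum_eq_sum: "fa_sum A f = sum f A"
  by (simp add: fa_sum_def fun_eq_iff sum_fun_apply)

lemma fa_smul_add: "fa_smul c (p + q) = fa_smul c p + fa_smul c (q :: ('a, 'r::semiring) fa)"
  by (simp add: fa_smul_def fun_eq_iff distrib_left)

lemma fa_smul_diff: "fa_smul c (p - q) = fa_smul c p - fa_smul c (q :: ('a, 'r::ring) fa)"
  by (simp add: fa_smul_def fun_eq_iff right_diff_distrib)

lemma fa_smul_zero [simp]: "fa_smul c 0 = (0 :: ('a, 'r::mult_zero) fa)"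
  by (simp add: fa_smul_def fun_eq_iff)

lemma fa_smul_one [simp]: "fa_smul 1 p = (p :: ('a, 'r::monoid_mult) fa)"
  by (simp add: fa_smul_def)

lemma fa_smul_smul: "fa_smul a (fa_smul b p) = fa_smul (a * b) (p :: ('a, 'r::semigroup_mult) fa)"
  by (simp add: fa_smul_def mult.assoc)

lemma fa_smul_minus_left: "fa_smul (- c) p = - fa_smul c (p :: ('a, 'r::ring) fa)"
  by (simp add: fa_smul_def fun_eq_iff)

lemma fa_smul_minus_right: "fa_smul c (- p) = - fa_smul c (p :: ('a, 'r::ring) fa)"
  by (simp add: fa_smul_def fun_eq_iff)

lemma fa_smul_sum: "fa_smul c (sum f A) = (\<Sum>i\<in>A. fa_smul c (f i :: ('a, 'r::comm_semiring_0) fa))"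
  by (simp add: fa_smul_def fun_eq_iff sum_fun_apply sum_distrib_left)

lemma fa_mul_sum_left: "fa_mul (sum f A) p = (\<Sum>i\<in>A. fa_mul (f i) (p :: ('a, 'r::comm_semiring_0) fa))"
  by (simp add: fa_mul_def fun_eq_iff sum_fun_apply sum_distrib_right) (intro allI sum.swap)

lemma fa_mul_sum_right: "fa_mul p (sum f A) = (\<Sum>i\<in>A. fa_mul p (f i :: ('a, 'r::comm_semiring_0) fa))"
  by (simp add: fa_mul_def fun_eq_iff sum_fun_apply sum_distrib_left) (intro allI sum.swap)

lemma fa_mul_add_left: "fa_mul (p + q) s = fa_mul p s + fa_mul q (s :: ('a, 'r::comm_semiring_0) fa)"
  by (simp add: fa_mul_def fun_eq_iff distrib_right sum.distrib)

lemma fa_mul_add_right: "fa_mul s (p + q) = fa_mul s p + fa_mul s (q :: ('a, 'r::comm_semiring_0) fa)"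
  by (simp add: fa_mul_def fun_eq_iff distrib_left sum.distrib)

lemma fa_mul_diff_right: "fa_mul s (p - q) = fa_mul s p - fa_mul s (q :: ('a, 'r::comm_ring) fa)"
  by (simp add: fa_mul_def fun_eq_iff right_diff_distrib sum_subtractf)

lemma fa_mul_diff_left: "fa_mul (p - q) s = fa_mul p s - fa_mul q (s :: ('a, 'r::comm_ring) fa)"
  by (simp add: fa_mul_def fun_eq_iff left_diff_distrib sum_subtractf)

lemma fa_mul_smul_left: "fa_mul (fa_smul c p) q = fa_smul c (fa_mul p (q :: ('a, 'r::comm_semiring_0) fa))"
  by (simp add: fa_mul_def fa_smul_def fun_eq_iff sum_distrib_left mult.assoc)

lemma fa_mul_smul_right: "fa_mul p (fa_smul c q) = fa_smul c (fa_mul p (q :: ('a, 'r::comm_semiring_0) fa))"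
  by (simp add: fa_mul_def fa_smul_def fun_eq_iff sum_distrib_left mult.left_commute)

lemma fa_mul_zero_left [simp]: "fa_mul 0 p = (0 :: ('a, 'r::comm_semiring_0) fa)"
  by (simp add: fa_mul_def fun_eq_iff)

lemma fa_mul_zero_right [simp]: "fa_mul p 0 = (0 :: ('a, 'r::comm_semiring_0) fa)"
  by (simp add: fa_mul_def fun_eq_iff)

lemma take_eq_iff_prefix: "i \<le> length w \<Longrightarrow> take i w = u \<longleftrightarrow> i = length u \<and> (\<exists>a. w = u @ a)"
  by (auto simp: append_eq_conv_conj intro: exI[of _ "drop i w"])

lemma drop_eq_iff_suffix: "i \<le> length w \<Longrightarrow> drop i w = v \<longleftrightarrow> i = length w - length v \<and> (\<exists>a. w = a @ v)"
  by (auto simp: append_eq_conv_conj intro: exI[of _ "take i w"])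

lemma fa_mul_word_left_apply:
  "fa_mul (fa_word u) p w = (if \<exists>a. w = u @ a then p (drop (length u) w) else (0::'r::comm_semiring_1))"
proof -
  have "fa_mul (fa_word u) p w =
      (\<Sum>i\<le>length w. if i = length u then (if \<exists>a. w = u @ a then p (drop i w) else 0) else 0)"
    unfolding fa_mul_def fa_word_def by (rule sum.cong) (simp_all add: take_eq_iff_prefix)
  then show ?thesis by (auto simp: sum.delta')
qed

lemma fa_mul_word_right_apply:
  "fa_mul p (fa_word v) w =
    (if \<exists>a. w = a @ v then p (take (length w - length v) w) else (0::'r::comm_semiring_1))"
proof -
  have "fa_mul p (fa_word v) w =
      (\<Sum>i\<le>length w. if i = length w - length v then (if \<exists>a. w = a @ v then p (take i w) else 0) else 0)"
    unfolding fa_mul_def fa_word_def by (rule sum.cong) (simp_all add: drop_eq_iff_suffix)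
  then show ?thesis by (simp add: sum.delta')
qed

lemma fa_mul_word_left_append [simp]: "fa_mul (fa_word u) p (u @ a) = (p a :: 'r::comm_semiring_1)"
  by (simp add: fa_mul_word_left_apply)

lemma fa_mul_word_right_append [simp]: "fa_mul p (fa_word v) (a @ v) = (p a :: 'r::comm_semiring_1)"
  by (simp add: fa_mul_word_right_apply)

lemma fa_mul_word_left_not_prefix:
  "\<nexists>a. w = u @ a \<Longrightarrow> fa_mul (fa_word u) p w = (0 :: 'r::comm_semiring_1)"
  by (simp add: fa_mul_word_left_apply)

lemma fa_mul_word_right_not_suffix:
  "\<nexists>a. w = a @ v \<Longrightarrow> fa_mul p (fa_word v) w = (0 :: 'r::comm_semiring_1)"
  by (simp add: fa_mul_word_right_apply)

lemma fa_mul_word_Nil_left [simp]: "fa_mul (fa_word []) p = (p :: ('a, 'r::comm_semiring_1) fa)"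
  by (simp add: fun_eq_iff fa_mul_word_left_apply)

lemma fa_mul_word_Nil_right [simp]: "fa_mul p (fa_word []) = (p :: ('a, 'r::comm_semiring_1) fa)"
  by (simp add: fun_eq_iff fa_mul_word_right_apply)

lemma fa_mul_word_word [simp]:
  "fa_mul (fa_word u) (fa_word v) = (fa_word (u @ v) :: ('a, 'r::comm_semiring_1) fa)"
  unfolding fun_eq_iff fa_mul_word_left_apply by (auto simp: fa_word_def)

lemma fa_mul_word_assoc_left:
  "fa_mul (fa_word u) (fa_mul (fa_word u') p) = fa_mul (fa_word (u @ u')) (p :: ('a, 'r::comm_semiring_1) fa)"
proof
  fix w
  show "fa_mul (fa_word u) (fa_mul (fa_word u') p) w = fa_mul (fa_word (u @ u')) p w"
  proof (cases "\<exists>a. w = u @ u' @ a")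
    case True
    then obtain a where "w = u @ u' @ a" by blast
    then show ?thesis using fa_mul_word_left_append[of "u @ u'" p a] by simp
  next
    case False
    then have "fa_mul (fa_word u) (fa_mul (fa_word u') p) w = 0"
      by (cases "\<exists>b. w = u @ b") (auto simp: fa_mul_word_left_not_prefix)
    with False show ?thesis by (simp add: fa_mul_word_left_not_prefix)
  qed
qed

lemma fa_mul_word_assoc_right:
  "fa_mul (fa_mul p (fa_word v')) (fa_word v) = fa_mul p (fa_word (v' @ v) :: ('a, 'r::comm_semiring_1) fa)"
proof
  fix w
  show "fa_mul (fa_mul p (fa_word v')) (fa_word v) w = fa_mul p (fa_word (v' @ v)) w"
  proof (cases "\<exists>a. w = a @ v' @ v")
    case True
    then obtain a where "w = (a @ v') @ v" by auto
    then show ?thesis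
      using fa_mul_word_right_append[of p "v' @ v" a]
        fa_mul_word_right_append[of "fa_mul p (fa_word v')" v "a @ v'"] by simp
  next
    case False
    then have "fa_mul (fa_mul p (fa_word v')) (fa_word v) w = 0"
      by (cases "\<exists>b. w = b @ v") (auto simp: fa_mul_word_right_not_suffix)
    with False show ?thesis by (simp add: fa_mul_word_right_not_suffix)
  qed
qed

lemma fa_mul_word_assoc:
  "fa_mul (fa_word u) (fa_mul p (fa_word v)) = fa_mul (fa_mul (fa_word u) p) (fa_word v :: ('a, 'r::comm_semiring_1) fa)"
proof
  fix w
  show "fa_mul (fa_word u) (fa_mul p (fa_word v)) w = fa_mul (fa_mul (fa_word u) p) (fa_word v) w"
  proof (cases "\<exists>a. w = u @ a @ v")
    case True
    then obtain a where "w = u @ a @ v" by auto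
    then show ?thesis using fa_mul_word_right_append[of "fa_mul (fa_word u) p" v "u @ a"] by simp
  next
    case False
    then have "fa_mul (fa_word u) (fa_mul p (fa_word v)) w = 0"
      by (cases "\<exists>b. w = u @ b") (auto simp: fa_mul_word_left_not_prefix fa_mul_word_right_not_suffix)
    moreover from False have "fa_mul (fa_mul (fa_word u) p) (fa_word v) w = 0"
      by (cases "\<exists>b. w = b @ v") (auto simp: fa_mul_word_left_not_prefix fa_mul_word_right_not_suffix)
    ultimately show ?thesis by simp
  qed
qed

lemma fa_pow_letter: "fa_pow (fa_word [a]) j = (fa_word (replicate j a) :: ('a, 'r::comm_semiring_1) fa)"
  by (induction j) (simp_all add: fa_pow_def fa_one_def)

section \<open>Congruence modulo a two-sided ideal\<close>

text \<open>Rewriting elements of the free algebra, which are functions, may leave eta-expanded terms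
  such as \<open>\<lambda>w. (p + q) w\<close>; without these two simp rules they contract back to \<open>p + q\<close> instead of
  turning into \<open>\<lambda>w. p w + q w\<close>.\<close>

declare plus_fun_apply [simp del] zero_fun_apply [simp del]

lemma fa_ideal_0: "0 \<in> fa_ideal R"
  using fa_ideal.zero[of R] by (simp add: fa_zero_eq_0)

lemma fa_ideal_add: "p \<in> fa_ideal R \<Longrightarrow> q \<in> fa_ideal R \<Longrightarrow> p + q \<in> fa_ideal R"
  using fa_ideal.add[of p R q] by (simp add: fa_add_eq_plus)

lemma fa_ideal_smul: "p \<in> fa_ideal R \<Longrightarrow> fa_smul c p \<in> fa_ideal R"
proof (induction p rule: fa_ideal.induct)
  case zero
  show ?case unfolding fa_zero_eq_0 fa_smul_zero by (rule fa_ideal_0)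
next
  case (add p q)
  show ?case unfolding fa_add_eq_plus fa_smul_add by (intro fa_ideal_add add.IH)
qed (simp add: fa_smul_smul fa_ideal.gen)

lemma fa_ideal_uminus: "p \<in> fa_ideal R \<Longrightarrow> - p \<in> fa_ideal R"
  using fa_ideal_smul[of p R "- 1"] by (simp add: fa_smul_minus_left)

lemma fa_ideal_sum: "(\<And>i. i \<in> A \<Longrightarrow> f i \<in> fa_ideal R) \<Longrightarrow> sum f A \<in> fa_ideal R"
  by (induction A rule: infinite_finite_induct) (simp_all add: fa_ideal_0 fa_ideal_add)

lemma fa_ideal_mul_words: "p \<in> fa_ideal R \<Longrightarrow> fa_mul (fa_word u) (fa_mul p (fa_word v)) \<in> fa_ideal R"
proof (induction p rule: fa_ideal.induct)
  case zero
  show ?case unfolding fa_zero_eq_0 fa_mul_zero_left fa_mul_zero_right by (rule fa_ideal_0)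
next
  case (add p q)
  show ?case unfolding fa_add_eq_plus fa_mul_add_left fa_mul_add_right by (intro fa_ideal_add add.IH)
next
  case (gen r c u' v')
  have "fa_mul (fa_word u) (fa_mul (fa_smul c (fa_mul (fa_mul (fa_word u') r) (fa_word v'))) (fa_word v)) =
      fa_smul c (fa_mul (fa_mul (fa_word (u @ u')) r) (fa_word (v' @ v)))"
    by (simp add: fa_mul_smul_left fa_mul_smul_right fa_mul_word_assoc_right fa_mul_word_assoc_left
        flip: fa_mul_word_assoc)
  then show ?case using gen by (simp add: fa_ideal.gen)
qed

lemma fa_over_mono: "fa_over A p \<Longrightarrow> A \<subseteq> B \<Longrightarrow> fa_over B p"
  unfolding fa_over_def by blast

lemma fa_over_eq_sum_words:
  assumes "fa_over A q"
  shows "q = (\<Sum>w\<in>{w. q w \<noteq> 0}. fa_smul (q w) (fa_word w :: ('a, 'r::comm_semiring_1) fa))"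
  using assms
  by (auto simp: fa_over_def fun_eq_iff sum_fun_apply fa_smul_def fa_word_def if_distrib sum.delta'
      zero_fun_apply cong: if_cong)

lemma fa_ideal_mul_left:
  assumes "fa_over A q" "p \<in> fa_ideal R"
  shows "fa_mul q p \<in> fa_ideal R"
proof -
  have "fa_mul (fa_word w) p \<in> fa_ideal R" for w
    using fa_ideal_mul_words[OF assms(2), of w "[]"] by simp
  then show ?thesis
    by (subst fa_over_eq_sum_words[OF assms(1)])
      (simp add: fa_mul_sum_left fa_mul_smul_left fa_ideal_sum fa_ideal_smul)
qed

definition fa_cong :: "('a, 'r::comm_ring_1) fa set \<Rightarrow> ('a, 'r) fa \<Rightarrow> ('a, 'r) fa \<Rightarrow> bool" where
  "fa_cong R p q \<longleftrightarrow> p - q \<in> fa_ideal R"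

lemma fa_cong_refl [simp]: "fa_cong R p p"
  by (simp add: fa_cong_def fa_ideal_0)

lemma fa_cong_sym: "fa_cong R p q \<Longrightarrow> fa_cong R q p"
  unfolding fa_cong_def using fa_ideal_uminus[of "p - q" R] by (simp only: minus_diff_eq)

lemma fa_cong_trans [trans]: "fa_cong R p q \<Longrightarrow> fa_cong R q s \<Longrightarrow> fa_cong R p s"
  unfolding fa_cong_def using fa_ideal_add[of "p - q" R "q - s"] by (simp add: algebra_simps)

text \<open>Without these, a calculation mixing \<open>=\<close> and \<open>fa_cong\<close> can pick a vacuous instance of the
  generic substitution rule.\<close>

lemma eq_fa_cong_trans [trans]: "p = q \<Longrightarrow> fa_cong R q s \<Longrightarrow> fa_cong R p s"
  by simp

lemma fa_cong_eq_trans [trans]: "fa_cong R p q \<Longrightarrow> q = s \<Longrightarrow> fa_cong R p s"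
  by simp

lemma fa_cong_add: "fa_cong R p p' \<Longrightarrow> fa_cong R q q' \<Longrightarrow> fa_cong R (p + q) (p' + q')"
  unfolding fa_cong_def using fa_ideal_add[of "p - p'" R "q - q'"] by (simp add: algebra_simps)

lemma fa_cong_smul: "fa_cong R p q \<Longrightarrow> fa_cong R (fa_smul c p) (fa_smul c q)"
  unfolding fa_cong_def using fa_ideal_smul[of "p - q" R c] by (simp only: fa_smul_diff)

lemma fa_cong_sum: "(\<And>i. i \<in> A \<Longrightarrow> fa_cong R (f i) (g i)) \<Longrightarrow> fa_cong R (sum f A) (sum g A)"
  unfolding fa_cong_def using fa_ideal_sum[of A "\<lambda>i. f i - g i" R] by (simp only: sum_subtractf)

lemma fa_cong_mul_words:
  "fa_cong R p q \<Longrightarrow>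
    fa_cong R (fa_mul (fa_word u) (fa_mul p (fa_word v))) (fa_mul (fa_word u) (fa_mul q (fa_word v)))"
  unfolding fa_cong_def using fa_ideal_mul_words[of "p - q" R u v]
  by (simp only: fa_mul_diff_left fa_mul_diff_right)

lemma fa_cong_mul_left: "fa_over A s \<Longrightarrow> fa_cong R p q \<Longrightarrow> fa_cong R (fa_mul s p) (fa_mul s q)"
  unfolding fa_cong_def using fa_ideal_mul_left[of A s "p - q" R] by (simp only: fa_mul_diff_right)

lemma fa_cong_0_iff: "fa_cong R p 0 \<longleftrightarrow> p \<in> fa_ideal R"
  by (simp add: fa_cong_def)

section \<open>Defining relations of the cyclotomic odd nilHecke algebra\<close>

lemma fa_cong_generator: "r \<in> R \<Longrightarrow> fa_cong R (fa_mul (fa_word u) (fa_mul r (fa_word v))) 0"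
  using fa_ideal_mul_words[OF fa_ideal.gen[of r R 1 "[]" "[]"]] by (simp add: fa_cong_0_iff)

lemma fa_cong_mul_word_left: "fa_cong R p q \<Longrightarrow> fa_cong R (fa_mul (fa_word u) p) (fa_mul (fa_word u) q)"
  using fa_cong_mul_words[of R p q u "[]"] by simp

lemma onh_anticomm_x_tau:
  assumes "1 \<le> i" "i \<le> n" "1 \<le> j" "j < n" "i \<noteq> j" "i \<noteq> j + 1"
  shows "fa_cong (onh_rels n l) (fa_word (u @ Tau j # X i # v) :: (onh_gen, 'k::field) fa)
           (- fa_word (u @ X i # Tau j # v))"
proof -
  have "fa_add (fa_word [X i, Tau j]) (fa_word [Tau j, X i]) \<in> (onh_rels n l :: (onh_gen, 'k) fa set)"
    using assms unfolding onh_rels_def by blast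
  from fa_cong_generator[OF this, of u v] show ?thesis
    by (simp add: fa_cong_def fa_add_eq_plus fa_mul_add_left fa_mul_add_right fa_mul_word_assoc_right
        add.commute)
qed

lemma onh_anticomm_x_x:
  assumes "1 \<le> i" "i \<le> n" "1 \<le> j" "j \<le> n" "i \<noteq> j"
  shows "fa_cong (onh_rels n l) (fa_word (u @ X j # X i # v) :: (onh_gen, 'k::field) fa)
           (- fa_word (u @ X i # X j # v))"
proof -
  have "fa_add (fa_word [X i, X j]) (fa_word [X j, X i]) \<in> (onh_rels n l :: (onh_gen, 'k) fa set)"
    using assms unfolding onh_rels_def by blast
  from fa_cong_generator[OF this, of u v] show ?thesis
    by (simp add: fa_cong_def fa_add_eq_plus fa_mul_add_left fa_mul_add_right fa_mul_word_assoc_right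
        add.commute)
qed

lemma onh_tau_x_same:
  assumes "1 \<le> i" "i < n"
  shows "fa_cong (onh_rels n l) (fa_word (u @ Tau i # X i # v) :: (onh_gen, 'k::field) fa)
           (fa_word (u @ v) - fa_word (u @ X (Suc i) # Tau i # v))"
proof -
  have "fa_diff (fa_add (fa_word [Tau i, X i]) (fa_word [X (i + 1), Tau i])) fa_one
      \<in> (onh_rels n l :: (onh_gen, 'k) fa set)"
    using assms unfolding onh_rels_def by blast
  from fa_cong_generator[OF this, of u v] show ?thesis
    by (simp add: fa_cong_def fa_add_eq_plus fa_diff_eq_minus fa_one_def fa_mul_add_left
        fa_mul_add_right fa_mul_diff_left fa_mul_diff_right fa_mul_word_assoc_right algebra_simps)
qed

lemma onh_cyclotomic: "fa_cong (onh_rels n l) (fa_word (u @ replicate l (X 1)) :: (onh_gen, 'k::field) fa) 0"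
proof -
  have "fa_word (replicate l (X 1)) \<in> (onh_rels n l :: (onh_gen, 'k) fa set)"
    unfolding onh_rels_def by blast
  from fa_cong_generator[OF this, of u "[]"] show ?thesis by simp
qed

lemma onh_anticomm_x_power:
  assumes "1 \<le> a" "a \<le> n" "1 \<le> b" "b \<le> n" "a \<noteq> b"
  shows "fa_cong (onh_rels n l) (fa_word (u @ replicate j (X a) @ X b # v) :: (onh_gen, 'k::field) fa)
           (fa_smul ((-1)^j) (fa_word (u @ X b # replicate j (X a) @ v)))"
proof (induction j arbitrary: u)
  case (Suc j)
  have "fa_cong (onh_rels n l) (fa_word (u @ replicate (Suc j) (X a) @ X b # v) :: (onh_gen, 'k) fa)
      (fa_smul ((-1)^j) (fa_word (u @ X a # X b # replicate j (X a) @ v)))"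
    using Suc.IH[of "u @ [X a]"] by simp
  also have "fa_cong (onh_rels n l) \<dots> (fa_smul ((-1)^j) (- fa_word (u @ X b # X a # replicate j (X a) @ v)))"
    using assms by (intro fa_cong_smul onh_anticomm_x_x) auto
  also have "\<dots> = fa_smul ((-1)^Suc j) (fa_word (u @ X b # replicate (Suc j) (X a) @ v))"
    by (simp add: fa_smul_minus_left fa_smul_minus_right)
  finally show ?case .
qed simp

section \<open>Moving \<open>x\<^sub>1\<close> to the left of \<open>\<tau>\<^sub>S\<close>\<close>

fun tau_list :: "nat \<Rightarrow> nat set \<Rightarrow> onh_gen list" where
  "tau_list 0 S = []"
| "tau_list (Suc k) S = (if Suc k \<in> S then [Tau (Suc k)] else []) @ tau_list k S"

lemma tau_list_cong: "(\<And>i. 1 \<le> i \<Longrightarrow> i \<le> k \<Longrightarrow> i \<in> S \<longleftrightarrow> i \<in> S') \<Longrightarrow> tau_list k S = tau_list k S'"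
  by (induction k) auto

lemma tau_list_insert_above [simp]: "k < i \<Longrightarrow> tau_list k (insert i S) = tau_list k S"
  by (rule tau_list_cong) auto

definition first_gap :: "nat set \<Rightarrow> nat" where
  "first_gap S = (LEAST i. 0 < i \<and> i \<notin> S)"

lemma first_gap_eqI:
  assumes "0 < m" "m \<notin> S" "\<And>i. 0 < i \<Longrightarrow> i < m \<Longrightarrow> i \<in> S"
  shows "first_gap S = m"
  unfolding first_gap_def
proof (rule Least_equality)
  show "0 < m \<and> m \<notin> S" using assms by simp
  show "m \<le> i" if "0 < i \<and> i \<notin> S" for i
    using that assms(3) by (meson not_less)
qed

lemma
  assumes "S \<subseteq> {1..k}"
  shows first_gap_pos: "0 < first_gap S"
    and first_gap_notin: "first_gap S \<notin> S"
    and first_gap_le: "first_gap S \<le> Suc k"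
    and below_first_gap: "\<And>i. 0 < i \<Longrightarrow> i < first_gap S \<Longrightarrow> i \<in> S"
proof -
  have ex: "0 < Suc k \<and> Suc k \<notin> S" using assms by auto
  show "0 < first_gap S" "first_gap S \<notin> S"
    unfolding first_gap_def using LeastI[of "\<lambda>i. 0 < i \<and> i \<notin> S", OF ex] by auto
  show "first_gap S \<le> Suc k" unfolding first_gap_def by (rule Least_le[of "\<lambda>i. 0 < i \<and> i \<notin> S", OF ex])
  show "\<And>i. 0 < i \<Longrightarrow> i < first_gap S \<Longrightarrow> i \<in> S" unfolding first_gap_def using not_less_Least by blast
qed

lemma first_gap_eq_Suc_iff:
  assumes "S \<subseteq> {1..k}"
  shows "first_gap S = Suc k \<longleftrightarrow> S = {1..k}"
proof
  show "S = {1..k}" if "first_gap S = Suc k"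
    using assms below_first_gap[OF assms] that by fastforce
  show "first_gap S = Suc k" if "S = {1..k}"
    using that by (intro first_gap_eqI) auto
qed

definition tau_x1_expansion :: "nat \<Rightarrow> nat set \<Rightarrow> (onh_gen, 'k::comm_ring_1) fa" where
  "tau_x1_expansion k S =
     fa_smul ((-1)^card S) (fa_word (X (first_gap S) # tau_list k S)) +
     (\<Sum>j\<in>{1..<first_gap S}. fa_smul ((-1)^(j - 1)) (fa_word (tau_list k (S - {j}))))"

lemma tau_x1_cong_Cons_Tau:
  assumes IH: "fa_cong (onh_rels n l) (fa_word (tau_list k S @ [X 1])) (tau_x1_expansion k S :: (onh_gen, 'k::field) fa)"
    and S: "S \<subseteq> {1..k}"
  shows "fa_cong (onh_rels n l) (fa_word (tau_list (Suc k) (insert (Suc k) S) @ [X 1]) :: (onh_gen, 'k) fa)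
           (fa_smul ((-1)^card S) (fa_word (Tau (Suc k) # X (first_gap S) # tau_list k S)) +
            (\<Sum>j\<in>{1..<first_gap S}. fa_smul ((-1)^(j - 1)) (fa_word (tau_list (Suc k) (insert (Suc k) S - {j})))))"
proof -
  have "fa_word (tau_list (Suc k) (insert (Suc k) S) @ [X 1]) =
      (fa_mul (fa_word [Tau (Suc k)]) (fa_word (tau_list k S @ [X 1])) :: (onh_gen, 'k) fa)"
    by simp
  also have "fa_cong (onh_rels n l) \<dots> (fa_mul (fa_word [Tau (Suc k)]) (tau_x1_expansion k S))"
    by (rule fa_cong_mul_word_left[OF IH])
  also have "\<dots> = fa_smul ((-1)^card S) (fa_word (Tau (Suc k) # X (first_gap S) # tau_list k S)) +
            (\<Sum>j\<in>{1..<first_gap S}. fa_smul ((-1)^(j - 1)) (fa_word (Tau (Suc k) # tau_list k (S - {j}))))"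
    by (simp add: tau_x1_expansion_def fa_mul_add_right fa_mul_sum_right fa_mul_smul_right)
  also have "(\<Sum>j\<in>{1..<first_gap S}. fa_smul ((-1)^(j - 1)) (fa_word (Tau (Suc k) # tau_list k (S - {j})))) =
      (\<Sum>j\<in>{1..<first_gap S}. fa_smul ((-1)^(j - 1)) (fa_word (tau_list (Suc k) (insert (Suc k) S - {j}))))"
    using first_gap_le[OF S] by (intro sum.cong) (auto simp: insert_Diff_if)
  finally show ?thesis .
qed

lemma tau_x1_cong_Suc_gap:
  assumes IH: "fa_cong (onh_rels n l) (fa_word (tau_list k S @ [X 1])) (tau_x1_expansion k S :: (onh_gen, 'k::field) fa)"
    and S: "S \<subseteq> {1..k}" and gap: "first_gap S \<le> k" and "Suc k < n"
  shows "fa_cong (onh_rels n l) (fa_word (tau_list (Suc k) (insert (Suc k) S) @ [X 1]))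
           (tau_x1_expansion (Suc k) (insert (Suc k) S) :: (onh_gen, 'k) fa)"
proof -
  let ?m = "first_gap S" and ?T = "Tau (Suc k)"
  let ?rest = "\<Sum>j\<in>{1..<?m}. fa_smul ((-1)^(j - 1)) (fa_word (tau_list (Suc k) (insert (Suc k) S - {j})))
    :: (onh_gen, 'k) fa"
  have gap_insert: "first_gap (insert (Suc k) S) = ?m"
    using first_gap_pos[OF S] first_gap_notin[OF S] below_first_gap[OF S] gap by (intro first_gap_eqI) auto
  have card_insert: "card (insert (Suc k) S) = Suc (card S)"
    using S finite_subset[OF S] by (subst card_insert_disjoint) auto
  have "fa_cong (onh_rels n l) (fa_word (tau_list (Suc k) (insert (Suc k) S) @ [X 1]))
      (fa_smul ((-1)^card S) (fa_word (?T # X ?m # tau_list k S)) + ?rest)"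
    by (rule tau_x1_cong_Cons_Tau[OF IH S])
  also have "fa_cong (onh_rels n l) \<dots> (fa_smul ((-1)^card S) (- fa_word (X ?m # ?T # tau_list k S)) + ?rest)"
    using first_gap_pos[OF S] gap assms(4)
    by (intro fa_cong_add fa_cong_refl fa_cong_smul onh_anticomm_x_tau[where u = "[]", simplified]) auto
  also have "\<dots> = tau_x1_expansion (Suc k) (insert (Suc k) S)"
    by (simp add: tau_x1_expansion_def gap_insert card_insert fa_smul_minus_left
        fa_smul_minus_right)
  finally show ?thesis .
qed

lemma tau_x1_cong_Suc_full:
  assumes IH: "fa_cong (onh_rels n l) (fa_word (tau_list k {1..k} @ [X 1]))
      (tau_x1_expansion k {1..k} :: (onh_gen, 'k::field) fa)"
    and "Suc k < n"
  shows "fa_cong (onh_rels n l) (fa_word (tau_list (Suc k) {1..Suc k} @ [X 1]))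
           (tau_x1_expansion (Suc k) {1..Suc k} :: (onh_gen, 'k) fa)"
proof -
  let ?T = "Tau (Suc k)" and ?w = "tau_list k {1..k}"
  let ?rest = "\<Sum>j\<in>{1..<Suc k}. fa_smul ((-1)^(j - 1)) (fa_word (tau_list (Suc k) ({1..Suc k} - {j})))
    :: (onh_gen, 'k) fa"
  have full: "insert (Suc k) {1..k} = {1..Suc k}" by auto
  have gap: "first_gap {1..k} = Suc k" "first_gap {1..Suc k} = Suc (Suc k)"
    using first_gap_eq_Suc_iff[of "{1..k}" k] first_gap_eq_Suc_iff[of "{1..Suc k}" "Suc k"] by auto
  have tau_full: "tau_list (Suc k) {1..Suc k} = ?T # ?w"
    unfolding full[symmetric] by simp
  have split: "(\<Sum>j\<in>{1..<Suc (Suc k)}. fa_smul ((-1)^(j - 1))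
      (fa_word (tau_list (Suc k) ({1..Suc k} - {j})))) = ?rest + fa_smul ((-1)^k) (fa_word ?w)"
    unfolding full[symmetric] by (subst sum.atLeastLessThan_Suc) simp_all
  have "fa_cong (onh_rels n l) (fa_word (tau_list (Suc k) {1..Suc k} @ [X 1]))
      (fa_smul ((-1)^k) (fa_word (?T # X (Suc k) # ?w)) + ?rest)"
    using tau_x1_cong_Cons_Tau[OF IH order_refl] by (simp only: gap(1) full card_atLeastAtMost diff_Suc_1)
  also have "fa_cong (onh_rels n l) \<dots>
      (fa_smul ((-1)^k) (fa_word ?w - fa_word (X (Suc (Suc k)) # ?T # ?w)) + ?rest)"
    using assms(2) by (intro fa_cong_add fa_cong_refl fa_cong_smul onh_tau_x_same[where u = "[]", simplified])
      auto
  also have "\<dots> = tau_x1_expansion (Suc k) {1..Suc k}"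
    unfolding tau_x1_expansion_def gap(2) tau_full split
    by (simp add: fa_smul_diff fa_smul_minus_left algebra_simps)
  finally show ?thesis .
qed

lemma tau_x1_expansion_Suc_notin:
  "Suc k \<notin> S \<Longrightarrow> tau_x1_expansion (Suc k) S = tau_x1_expansion k S"
  by (simp add: tau_x1_expansion_def)

lemma tau_x1_cong:
  assumes "S \<subseteq> {1..k}" "k < n"
  shows "fa_cong (onh_rels n l) (fa_word (tau_list k S @ [X 1])) (tau_x1_expansion k S :: (onh_gen, 'k::field) fa)"
  using assms
proof (induction k arbitrary: S)
  case 0
  then have "first_gap S = 1" by (intro first_gap_eqI) auto
  with 0 show ?case by (simp add: tau_x1_expansion_def)
next
  case (Suc k)
  show ?case
  proof (cases "Suc k \<in> S")
    case False
    with Suc.prems have "S \<subseteq> {1..k}" by (auto simp: subset_iff le_Suc_eq)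
    with Suc False show ?thesis by (simp add: tau_x1_expansion_Suc_notin)
  next
    case True
    define S' where "S' = S - {Suc k}"
    have S': "S' \<subseteq> {1..k}" and S: "S = insert (Suc k) S'"
      using Suc.prems True by (auto simp: S'_def)
    have IH: "fa_cong (onh_rels n l) (fa_word (tau_list k S' @ [X 1])) (tau_x1_expansion k S' :: (onh_gen, 'k) fa)"
      using Suc S' by simp
    show ?thesis
    proof (cases "first_gap S' \<le> k")
      case True
      show ?thesis unfolding S by (rule tau_x1_cong_Suc_gap[OF IH S' True Suc.prems(2)])
    next
      case False
      then have "S' = {1..k}" using first_gap_le[OF S'] first_gap_eq_Suc_iff[OF S'] by simp
      with IH have "S = {1..Suc k}" and "fa_cong (onh_rels n l) (fa_word (tau_list k {1..k} @ [X 1]))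
          (tau_x1_expansion k {1..k} :: (onh_gen, 'k) fa)"
        using S by auto
      then show ?thesis using tau_x1_cong_Suc_full Suc.prems(2) by blast
    qed
  qed
qed

section \<open>Supports and the substitution \<open>t\<^sub>j \<mapsto> x\<^sub>j\<close>\<close>

lemma fa_over_0 [simp]: "fa_over A (0 :: ('a, 'r::zero) fa)"
  by (simp add: fa_over_def zero_fun_apply)

lemma fa_over_word: "set w \<subseteq> A \<Longrightarrow> fa_over A (fa_word w :: ('a, 'r::zero_neq_one) fa)"
  by (simp add: fa_over_def fa_word_def)

lemma fa_over_support_mono:
  assumes "fa_over A p" "\<And>w. q w \<noteq> 0 \<Longrightarrow> p w \<noteq> 0"
  shows "fa_over A q"
  unfolding fa_over_def
proof (intro conjI allI impI)
  have "{w. q w \<noteq> 0} \<subseteq> {w. p w \<noteq> 0}" using assms(2) by blast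
  with assms(1) show "finite {w. q w \<noteq> 0}" unfolding fa_over_def by (meson finite_subset)
  show "set w \<subseteq> A" if "q w \<noteq> 0" for w
    using assms that unfolding fa_over_def by blast
qed

lemma fa_over_add:
  assumes "fa_over A p" "fa_over A q"
  shows "fa_over A (p + q :: ('a, 'r::monoid_add) fa)"
  unfolding fa_over_def
proof (intro conjI allI impI)
  have "{w. (p + q) w \<noteq> 0} \<subseteq> {w. p w \<noteq> 0} \<union> {w. q w \<noteq> 0}" by (auto simp: plus_fun_apply)
  with assms show "finite {w. (p + q) w \<noteq> 0}" unfolding fa_over_def by (meson finite_UnI finite_subset)
  fix w assume "(p + q) w \<noteq> 0"
  then have "p w \<noteq> 0 \<or> q w \<noteq> 0" by (auto simp: plus_fun_apply)
  with assms show "set w \<subseteq> A" unfolding fa_over_def by blast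
qed

lemma fa_over_smul: "fa_over A p \<Longrightarrow> fa_over A (fa_smul c p :: ('a, 'r::mult_zero) fa)"
  by (erule fa_over_support_mono) (auto simp: fa_smul_def)

lemma fa_over_sum: "(\<And>i. i \<in> I \<Longrightarrow> fa_over A (f i)) \<Longrightarrow> fa_over A (sum f I :: ('a, 'r::comm_monoid_add) fa)"
  by (induction I rule: infinite_finite_induct) (simp_all add: fa_over_add)

lemma fa_over_mul_word_right:
  assumes p: "fa_over A p" and v: "set v \<subseteq> A"
  shows "fa_over A (fa_mul p (fa_word v) :: ('a, 'r::comm_semiring_1) fa)"
  unfolding fa_over_def
proof (intro conjI allI impI)
  have nz: "\<exists>a. w = a @ v \<and> p a \<noteq> 0" if "fa_mul p (fa_word v) w \<noteq> 0" for w
  proof -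
    from that obtain a where "w = a @ v" using fa_mul_word_right_not_suffix by blast
    with that show ?thesis by auto
  qed
  then have "{w. fa_mul p (fa_word v) w \<noteq> 0} \<subseteq> (\<lambda>a. a @ v) ` {a. p a \<noteq> 0}"
    by blast
  with p show "finite {w. fa_mul p (fa_word v) w \<noteq> 0}"
    unfolding fa_over_def by (meson finite_imageI finite_subset)
  fix w assume "fa_mul p (fa_word v) w \<noteq> 0"
  then obtain a where "w = a @ v" "p a \<noteq> 0" using nz by blast
  with p v show "set w \<subseteq> A" unfolding fa_over_def by auto
qed

lemma map_X_eq_map_X_iff [simp]: "map X u = map X v \<longleftrightarrow> u = v"
  by (simp add: inj_map_eq_map inj_def)

lemma subst_x_map_X [simp]: "subst_x p (map X v) = (of_int (p v) :: 'k::ring_1)"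
  by (simp add: subst_x_def)

lemma subst_x_not_map_X: "\<nexists>v. w = map X v \<Longrightarrow> subst_x p w = (0 :: 'k::ring_1)"
  by (simp add: subst_x_def)

lemma subst_x_add: "subst_x (p + q) = (subst_x p + subst_x q :: (onh_gen, 'k::ring_1) fa)"
  by (auto simp: subst_x_def fun_eq_iff plus_fun_apply)

lemma subst_x_0 [simp]: "subst_x 0 = (0 :: (onh_gen, 'k::ring_1) fa)"
  by (auto simp: subst_x_def fun_eq_iff zero_fun_apply)

lemma subst_x_smul: "subst_x (fa_smul c p) = (fa_smul (of_int c) (subst_x p) :: (onh_gen, 'k::ring_1) fa)"
  by (auto simp: subst_x_def fun_eq_iff fa_smul_def)

lemma subst_x_sum: "subst_x (sum f A) = (\<Sum>i\<in>A. subst_x (f i) :: (onh_gen, 'k::ring_1) fa)"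
proof -
  have "sum (subst_x \<circ> f) A = (subst_x (sum f A) :: (onh_gen, 'k) fa)"
    by (rule sum_comp_morphism) (simp_all add: subst_x_add)
  then show ?thesis unfolding comp_def by (rule sym)
qed

lemma subst_x_word: "subst_x (fa_word v) = (fa_word (map X v) :: (onh_gen, 'k::ring_1) fa)"
proof
  fix w
  show "subst_x (fa_word v) w = (fa_word (map X v) w :: 'k)"
    by (cases "\<exists>u. w = map X u") (auto simp: subst_x_not_map_X fa_word_def)
qed

lemma subst_x_mul_word_right:
  "subst_x (fa_mul p (fa_word v)) = (fa_mul (subst_x p) (fa_word (map X v)) :: (onh_gen, 'k::comm_ring_1) fa)"
proof
  fix w
  show "subst_x (fa_mul p (fa_word v)) w = (fa_mul (subst_x p) (fa_word (map X v)) w :: 'k)"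
  proof (cases "\<exists>a. w = map X (a @ v)")
    case True
    then obtain a where w: "w = map X (a @ v)" by blast
    have l: "subst_x (fa_mul p (fa_word v)) w = (of_int (p a) :: 'k)"
      unfolding w by (simp only: subst_x_map_X fa_mul_word_right_append)
    have r: "fa_mul (subst_x p) (fa_word (map X v)) w = (of_int (p a) :: 'k)"
      unfolding w map_append by simp
    show ?thesis by (simp only: l r)
  next
    case False
    have "fa_mul (subst_x p) (fa_word (map X v)) w = (0 :: 'k)"
    proof (cases "\<exists>b. w = b @ map X v")
      case True
      then obtain b where b: "w = b @ map X v" by blast
      with False have "\<nexists>a. b = map X a" by auto
      with b show ?thesis by (simp add: subst_x_not_map_X)
    qed (simp add: fa_mul_word_right_not_suffix)
    moreover from False have "subst_x (fa_mul p (fa_word v)) w = (0 :: 'k)"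
      by (auto simp: subst_x_def fa_mul_word_right_apply)
    ultimately show ?thesis by simp
  qed
qed

lemma fa_over_subst_x: "fa_over A p \<Longrightarrow> fa_over (X ` A) (subst_x p :: (onh_gen, 'k::ring_1) fa)"
  unfolding fa_over_def
proof (intro conjI allI impI)
  assume p: "finite {w. p w \<noteq> 0} \<and> (\<forall>w. p w \<noteq> 0 \<longrightarrow> set w \<subseteq> A)"
  have "{w. (subst_x p w :: 'k) \<noteq> 0} \<subseteq> map X ` {v. p v \<noteq> 0}"
    by (auto simp: subst_x_def)
  with p show "finite {w. (subst_x p w :: 'k) \<noteq> 0}" by (meson finite_imageI finite_subset)
  fix w assume nz: "(subst_x p w :: 'k) \<noteq> 0"
  then obtain v where w: "w = map X v" using subst_x_not_map_X by blast
  with nz have "p v \<noteq> 0" by auto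
  with p have "set v \<subseteq> A" by blast
  with w show "set w \<subseteq> X ` A" by auto
qed

section \<open>The coefficients of the expansion\<close>

lemma first_gap_le_k:
  assumes "S \<subseteq> {1..k}" "first_gap S \<noteq> Suc k"
  shows "first_gap S \<le> k"
  using first_gap_le[OF assms(1)] assms(2) by simp

lemma insert_first_gap_subset:
  assumes "S \<subseteq> {1..k}" "first_gap S \<noteq> Suc k"
  shows "insert (first_gap S) S \<subseteq> {1..k}"
  using first_gap_pos[OF assms(1)] first_gap_le_k[OF assms] assms(1) by auto

lemma card_insert_first_gap:
  assumes "S \<subseteq> {1..k}"
  shows "card (insert (first_gap S) S) = Suc (card S)"
  using first_gap_notin[OF assms] finite_subset[OF assms] by simp

text \<open>\<open>expansion_coeff k r S j\<close> is the coefficient of \<open>t\<^sub>k\<^sub>+\<^sub>1\<^sup>j\<close> in \<open>P\<^bsub>r,S\<^esub>\<close>. The recursion multiplies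
  by \<open>x\<^sub>1\<close> on the right, moves it to the left of each \<open>\<tau>\<^sub>S\<close> (\<open>tau_x1_cong\<close>), and then past
  \<open>t\<^sub>k\<^sub>+\<^sub>1\<^sup>j\<close>, which costs a sign \<open>(-1)\<^sup>j\<close>; the terms \<open>\<tau>\<^bsub>S - {j}\<^esub>\<close> are collected under
  \<open>T = S - {j}\<close>, for which \<open>j = m(T)\<close>.\<close>

fun expansion_coeff :: "nat \<Rightarrow> nat \<Rightarrow> nat set \<Rightarrow> nat \<Rightarrow> (nat, int) fa" where
  "expansion_coeff k 0 S j = (if S = {1..k} \<and> j = 0 then fa_one else 0)"
| "expansion_coeff k (Suc r) S j =
    (if first_gap S = Suc k then
       (if j = 0 then 0 else fa_smul ((-1)^k) (expansion_coeff k r S (j - 1)))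
     else fa_smul ((-1)^(card S + j)) (fa_mul (expansion_coeff k r S j) (fa_word [first_gap S]))
       + fa_smul ((-1)^(first_gap S - 1)) (expansion_coeff k r (insert (first_gap S) S) j))"

lemma expansion_coeff_Suc_full:
  "first_gap S = Suc k \<Longrightarrow>
    expansion_coeff k (Suc r) S j = (if j = 0 then 0 else fa_smul ((-1)^k) (expansion_coeff k r S (j - 1)))"
  by simp

lemma expansion_coeff_Suc_gap:
  "first_gap S \<noteq> Suc k \<Longrightarrow>
    expansion_coeff k (Suc r) S j =
      fa_smul ((-1)^(card S + j)) (fa_mul (expansion_coeff k r S j) (fa_word [first_gap S]))
      + fa_smul ((-1)^(first_gap S - 1)) (expansion_coeff k r (insert (first_gap S) S) j)"
  by simp

declare expansion_coeff.simps(2) [simp del]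

lemma expansion_coeff_over: "S \<subseteq> {1..k} \<Longrightarrow> fa_over {1..k} (expansion_coeff k r S j)"
proof (induction r arbitrary: S j)
  case 0
  then show ?case by (simp add: expansion_coeff.simps(1) fa_one_def fa_over_word)
next
  case (Suc r)
  show ?case
  proof (cases "first_gap S = Suc k")
    case True
    then show ?thesis using Suc by (simp add: expansion_coeff_Suc_full fa_over_smul)
  next
    case False
    have "first_gap S \<in> {1..k}"
      using first_gap_pos[OF Suc.prems] first_gap_le_k[OF Suc.prems False] by simp
    then show ?thesis
      using Suc insert_first_gap_subset[OF Suc.prems False]
      by (simp add: expansion_coeff_Suc_gap False fa_over_add fa_over_smul fa_over_mul_word_right)
  qed
qed

lemma expansion_coeff_eq_0:
  assumes "S \<subseteq> {1..k}" "r + card S < j + k"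
  shows "expansion_coeff k r S j = 0"
  using assms
proof (induction r arbitrary: S j)
  case 0
  have "card S \<le> k" using card_mono[OF _ "0.prems"(1)] by simp
  with 0 show ?case by (auto simp: expansion_coeff.simps(1))
next
  case (Suc r)
  show ?case
  proof (cases "first_gap S = Suc k")
    case True
    then have "card S = k" using first_gap_eq_Suc_iff[OF Suc.prems(1)] by simp
    with Suc True show ?thesis by (simp add: expansion_coeff_Suc_full)
  next
    case False
    then show ?thesis
      using Suc insert_first_gap_subset[OF Suc.prems(1) False] card_insert_first_gap[OF Suc.prems(1)]
      by (simp add: expansion_coeff_Suc_gap)
  qed
qed

lemma neg_one_power_mult_square: "s * s = 1 \<Longrightarrow> ((-1)^i * s) * ((-1)^i * s) = (1 :: int)"
  by (simp add: algebra_simps flip: power_add mult_2)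

lemma expansion_coeff_leading:
  assumes "S \<subseteq> {1..k}" "k \<le> r + card S"
  shows "\<exists>s. s * s = 1 \<and> expansion_coeff k r S (r + card S - k) = fa_smul s fa_one"
  using assms
proof (induction r arbitrary: S)
  case 0
  then have "S = {1..k}" using card_subset_eq[OF _ "0.prems"(1)] card_mono[OF _ "0.prems"(1)] by simp
  then show ?case by (intro exI[of _ 1]) (simp add: expansion_coeff.simps(1))
next
  case (Suc r)
  show ?case
  proof (cases "first_gap S = Suc k")
    case True
    then have "card S = k" using first_gap_eq_Suc_iff[OF Suc.prems(1)] by simp
    with Suc.IH[OF Suc.prems(1)] obtain s where "s * s = 1" "expansion_coeff k r S r = fa_smul s fa_one"
      by auto
    with True \<open>card S = k\<close> show ?thesis
      by (intro exI[of _ "(-1)^k * s"]) (simp add: expansion_coeff_Suc_full fa_smul_smul neg_one_power_mult_square)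
  next
    case False
    let ?m = "first_gap S"
    have "k \<le> r + card (insert ?m S)" using Suc.prems card_insert_first_gap[OF Suc.prems(1)] by simp
    with Suc.IH[OF insert_first_gap_subset[OF Suc.prems(1) False]] obtain s
      where "s * s = 1" "expansion_coeff k r (insert ?m S) (Suc r + card S - k) = fa_smul s fa_one"
      using card_insert_first_gap[OF Suc.prems(1)] Suc.prems(2) by (auto simp: Suc_diff_le)
    moreover have "expansion_coeff k r S (Suc r + card S - k) = 0"
      using Suc.prems by (intro expansion_coeff_eq_0) auto
    ultimately show ?thesis
      by (intro exI[of _ "(-1)^(?m - 1) * s"]) (simp add: expansion_coeff_Suc_gap False fa_smul_smul neg_one_power_mult_square)
  qed
qed

definition expansion_poly :: "nat \<Rightarrow> nat \<Rightarrow> nat set \<Rightarrow> (nat, int) fa" where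
  "expansion_poly k r S = fa_sum {..r} (\<lambda>j. fa_mul (expansion_coeff k r S j) (fa_pow (fa_word [k + 1]) j))"

lemma expansion_poly_over: "S \<subseteq> {1..k} \<Longrightarrow> fa_over {1..k + 1} (expansion_poly k r S)"
  unfolding expansion_poly_def fa_sum_eq_sum fa_pow_letter
  by (intro fa_over_sum fa_over_mul_word_right fa_over_mono[OF expansion_coeff_over]) auto

lemma card_less_if_first_gap_ne:
  assumes "S \<subseteq> {1..k}" "first_gap S \<noteq> Suc k"
  shows "card S < k"
proof -
  have "S \<subset> {1..k}" using assms first_gap_eq_Suc_iff[OF assms(1)] by blast
  then show ?thesis using psubset_card_mono[of "{1..k}" S] by simp
qed

lemma expansion_poly_Suc_full:
  assumes "first_gap S = Suc k"
  shows "expansion_poly k (Suc r) S = fa_smul ((-1)^k) (fa_mul (expansion_poly k r S) (fa_word [Suc k]))"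
proof -
  have "expansion_poly k (Suc r) S =
      (\<Sum>j\<le>r. fa_mul (expansion_coeff k (Suc r) S (Suc j)) (fa_word (replicate (Suc j) (Suc k))))"
    unfolding expansion_poly_def fa_sum_eq_sum fa_pow_letter sum.atMost_Suc_shift
    by (simp add: expansion_coeff_Suc_full[OF assms])
  also have "\<dots> = (\<Sum>j\<le>r. fa_smul ((-1)^k)
      (fa_mul (fa_mul (expansion_coeff k r S j) (fa_word (replicate j (Suc k)))) (fa_word [Suc k])))"
    by (simp add: expansion_coeff_Suc_full[OF assms] fa_mul_smul_left fa_mul_word_assoc_right
        replicate_append_same)
  also have "\<dots> = fa_smul ((-1)^k) (fa_mul (expansion_poly k r S) (fa_word [Suc k]))"
    by (simp add: expansion_poly_def fa_sum_eq_sum fa_pow_letter fa_mul_sum_left fa_smul_sum)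
  finally show ?thesis .
qed

section \<open>The expansion of \<open>\<tau>\<^sub>k \<cdots> \<tau>\<^sub>1 x\<^sub>1\<^sup>r\<close> in \<open>ONH\<^sub>n\<close>\<close>

lemma subst_x_expansion_poly:
  "subst_x (expansion_poly k r S) =
    (\<Sum>j\<le>r. fa_mul (subst_x (expansion_coeff k r S j)) (fa_word (replicate j (X (Suc k))))
      :: (onh_gen, 'k::comm_ring_1) fa)"
  by (simp add: expansion_poly_def fa_sum_eq_sum subst_x_sum fa_pow_letter subst_x_mul_word_right)

lemma onh_anticomm_x_power_mul_left:
  assumes "fa_over A c" "1 \<le> m" "m \<le> k" "k < n"
  shows "fa_cong (onh_rels n l) (fa_mul c (fa_word (X m # replicate j (X (Suc k)))))
           (fa_smul ((-1)^j) (fa_mul c (fa_word (replicate j (X (Suc k)) @ [X m]))) :: (onh_gen, 'k::field) fa)"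
proof -
  have "fa_cong (onh_rels n l) (fa_word (replicate j (X (Suc k)) @ [X m]))
      (fa_smul ((-1)^j) (fa_word (X m # replicate j (X (Suc k)))) :: (onh_gen, 'k) fa)"
    using onh_anticomm_x_power[where a = "Suc k" and b = m and u = "[]" and v = "[]" and n = n and l = l]
      assms by simp
  then have "fa_cong (onh_rels n l) (fa_word (X m # replicate j (X (Suc k))))
      (fa_smul ((-1)^j) (fa_word (replicate j (X (Suc k)) @ [X m])) :: (onh_gen, 'k) fa)"
    using fa_cong_smul[of _ _ _ "(-1)^j"] fa_cong_sym by (fastforce simp: fa_smul_smul)
  from fa_cong_mul_left[OF assms(1) this] show ?thesis by (simp add: fa_mul_smul_right)
qed

lemma expansion_poly_Suc_gap_cong:
  assumes S: "S \<subseteq> {1..k}" and gap: "first_gap S \<noteq> Suc k" and "k < n"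
  shows "fa_cong (onh_rels n l) (subst_x (expansion_poly k (Suc r) S))
     (fa_smul ((-1)^card S) (fa_mul (subst_x (expansion_poly k r S)) (fa_word [X (first_gap S)])) +
      fa_smul ((-1)^(first_gap S - 1)) (subst_x (expansion_poly k r (insert (first_gap S) S)))
      :: (onh_gen, 'k::field) fa)"
proof -
  let ?m = "first_gap S" and ?Y = "\<lambda>j. replicate j (X (Suc k))"
  let ?c = "\<lambda>j. subst_x (expansion_coeff k r S j) :: (onh_gen, 'k) fa"
  let ?d = "\<lambda>j. fa_smul ((-1)^(?m - 1)) (fa_mul (subst_x (expansion_coeff k r (insert ?m S) j)) (fa_word (?Y j)))
    :: (onh_gen, 'k) fa"
  have top: "expansion_coeff k (Suc r) S (Suc r) = 0"
    using card_less_if_first_gap_ne[OF S gap] by (intro expansion_coeff_eq_0[OF S]) auto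
  have "subst_x (expansion_poly k (Suc r) S) =
      (\<Sum>j\<le>r. fa_smul ((-1)^(card S + j)) (fa_mul (?c j) (fa_word (X ?m # ?Y j))) + ?d j)"
    unfolding subst_x_expansion_poly sum.atMost_Suc top
    by (simp add: expansion_coeff_Suc_gap[OF gap] subst_x_add subst_x_smul subst_x_mul_word_right
        fa_mul_add_left fa_mul_smul_left fa_mul_word_assoc_right)
  also have "fa_cong (onh_rels n l) \<dots>
      (\<Sum>j\<le>r. fa_smul ((-1)^card S) (fa_mul (?c j) (fa_word (?Y j @ [X ?m]))) + ?d j)"
  proof (intro fa_cong_sum fa_cong_add fa_cong_refl)
    fix j
    have "fa_cong (onh_rels n l) (fa_mul (?c j) (fa_word (X ?m # ?Y j)))
        (fa_smul ((-1)^j) (fa_mul (?c j) (fa_word (?Y j @ [X ?m]))))"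
      using first_gap_pos[OF S] first_gap_le_k[OF S gap] \<open>k < n\<close>
      by (intro onh_anticomm_x_power_mul_left[OF fa_over_subst_x[OF expansion_coeff_over[OF S]]]) auto
    from fa_cong_smul[OF this, of "(-1)^(card S + j)"]
    show "fa_cong (onh_rels n l) (fa_smul ((-1)^(card S + j)) (fa_mul (?c j) (fa_word (X ?m # ?Y j))))
        (fa_smul ((-1)^card S) (fa_mul (?c j) (fa_word (?Y j @ [X ?m]))))"
      by (simp add: fa_smul_smul power_add mult.assoc)
  qed
  also have "\<dots> = fa_smul ((-1)^card S) (fa_mul (subst_x (expansion_poly k r S)) (fa_word [X ?m])) +
      fa_smul ((-1)^(?m - 1)) (subst_x (expansion_poly k r (insert ?m S)))"
    by (simp add: subst_x_expansion_poly fa_mul_sum_left fa_smul_sum sum.distrib fa_mul_word_assoc_right)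
  finally show ?thesis .
qed

lemma expansion_poly_Suc_tau_cong:
  assumes S: "S \<subseteq> {1..k}" and "k < n"
  shows "fa_cong (onh_rels n l) (fa_mul (subst_x (expansion_poly k (Suc r) S)) (fa_word (tau_list k S)))
     (fa_smul ((-1)^card S) (fa_mul (subst_x (expansion_poly k r S)) (fa_word (X (first_gap S) # tau_list k S))) +
      (if first_gap S \<noteq> Suc k
       then fa_smul ((-1)^(first_gap S - 1))
         (fa_mul (subst_x (expansion_poly k r (insert (first_gap S) S))) (fa_word (tau_list k S)))
       else 0)
      :: (onh_gen, 'k::field) fa)"
proof (cases "first_gap S = Suc k")
  case True
  then have "card S = k" using first_gap_eq_Suc_iff[OF S] by simp
  with True show ?thesis
    by (simp add: expansion_poly_Suc_full subst_x_smul subst_x_mul_word_right fa_mul_smul_left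
        fa_mul_word_assoc_right)
next
  case False
  from fa_cong_mul_words[OF expansion_poly_Suc_gap_cong[OF S False assms(2)], where u = "[]" and v = "tau_list k S"]
  show ?thesis using False by (simp add: fa_mul_add_left fa_mul_smul_left fa_mul_word_assoc_right)
qed

lemma first_gap_remove:
  assumes "S \<subseteq> {1..k}" "0 < j" "j < first_gap S"
  shows "first_gap (S - {j}) = j"
  using assms below_first_gap[OF assms(1)] by (intro first_gap_eqI) auto

lemma first_gap_insert_first_gap:
  assumes "S \<subseteq> {1..k}" "first_gap S \<noteq> Suc k"
  shows "first_gap S < first_gap (insert (first_gap S) S)"
proof -
  let ?S' = "insert (first_gap S) S"
  have S': "?S' \<subseteq> {1..k}" by (rule insert_first_gap_subset[OF assms])
  have "i \<in> ?S'" if "0 < i" "i \<le> first_gap S" for i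
    using that below_first_gap[OF assms(1)] by (cases "i = first_gap S") auto
  with first_gap_pos[OF S'] first_gap_notin[OF S'] show ?thesis by (meson not_le)
qed

lemma sum_first_gap_reindex:
  "(\<Sum>S\<in>Pow {1..k}. \<Sum>j\<in>{1..<first_gap S}. F (S - {j}) j S) =
   (\<Sum>T\<in>Pow {1..k}. if first_gap T \<noteq> Suc k then F T (first_gap T) (insert (first_gap T) T) else 0)"
proof -
  let ?G = "{T \<in> Pow {1..k}. first_gap T \<noteq> Suc k}"
  have "(\<Sum>S\<in>Pow {1..k}. \<Sum>j\<in>{1..<first_gap S}. F (S - {j}) j S) =
      (\<Sum>(S, j)\<in>Sigma (Pow {1..k}) (\<lambda>S. {1..<first_gap S}). F (S - {j}) j S)"
    by (rule sum.Sigma) auto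
  also have "\<dots> = (\<Sum>T\<in>?G. F T (first_gap T) (insert (first_gap T) T))"
  proof (rule sum.reindex_bij_witness[where i = "\<lambda>T. (insert (first_gap T) T, first_gap T)"
        and j = "\<lambda>(S, j). S - {j}"])
    fix a assume "a \<in> Sigma (Pow {1..k}) (\<lambda>S. {1..<first_gap S})"
    then obtain S j where a: "a = (S, j)" and S: "S \<subseteq> {1..k}" and j: "0 < j" "j < first_gap S"
      by auto
    have "j \<in> S" using below_first_gap[OF S] j by blast
    moreover have "first_gap (S - {j}) = j" by (rule first_gap_remove[OF S j])
    moreover have "j \<noteq> Suc k" using j first_gap_le[OF S] by simp
    ultimately show "(\<lambda>T. (insert (first_gap T) T, first_gap T)) ((\<lambda>(S, j). S - {j}) a) = a"
      and "(\<lambda>(S, j). S - {j}) a \<in> ?G"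
      and "F ((\<lambda>(S, j). S - {j}) a) (first_gap ((\<lambda>(S, j). S - {j}) a))
          (insert (first_gap ((\<lambda>(S, j). S - {j}) a)) ((\<lambda>(S, j). S - {j}) a)) =
        (case a of (S, j) \<Rightarrow> F (S - {j}) j S)"
      using S by (auto simp: a insert_absorb)
  next
    fix T assume "T \<in> ?G"
    then have T: "T \<subseteq> {1..k}" and gap: "first_gap T \<noteq> Suc k" by auto
    show "(\<lambda>(S, j). S - {j}) (insert (first_gap T) T, first_gap T) = T"
      using first_gap_notin[OF T] by simp
    show "(insert (first_gap T) T, first_gap T) \<in> Sigma (Pow {1..k}) (\<lambda>S. {1..<first_gap S})"
      using insert_first_gap_subset[OF T gap] first_gap_pos[OF T] first_gap_insert_first_gap[OF T gap]
      by auto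
  qed
  also have "\<dots> = (\<Sum>T\<in>Pow {1..k}. if first_gap T \<noteq> Suc k
      then F T (first_gap T) (insert (first_gap T) T) else 0)"
    by (rule sum.inter_filter) simp
  finally show ?thesis .
qed

lemma subst_x_expansion_poly_0:
  "subst_x (expansion_poly k 0 S) = (if S = {1..k} then fa_word [] else (0 :: (onh_gen, 'k::comm_ring_1) fa))"
  by (simp add: expansion_poly_def fa_sum_eq_sum expansion_coeff.simps(1) fa_pow_def fa_one_def subst_x_word)

lemma tau_x1_power_expansion:
  assumes "k < n"
  shows "fa_cong (onh_rels n l) (fa_word (tau_list k {1..k} @ replicate r (X 1)))
     (\<Sum>S\<in>Pow {1..k}. fa_mul (subst_x (expansion_poly k r S)) (fa_word (tau_list k S))
      :: (onh_gen, 'k::field) fa)"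
proof (induction r)
  case 0
  have "fa_mul (subst_x (expansion_poly k 0 S)) (fa_word (tau_list k S)) =
      (if S = {1..k} then fa_word (tau_list k {1..k}) else 0 :: (onh_gen, 'k) fa)" for S
    by (simp add: subst_x_expansion_poly_0)
  then show ?case by (simp add: sum.delta)
next
  case (Suc r)
  let ?P = "\<lambda>S. subst_x (expansion_poly k r S) :: (onh_gen, 'k) fa"
  let ?A = "\<lambda>S. fa_smul ((-1)^card S) (fa_mul (?P S) (fa_word (X (first_gap S) # tau_list k S)))"
  let ?B = "\<lambda>S. if first_gap S \<noteq> Suc k
    then fa_smul ((-1)^(first_gap S - 1)) (fa_mul (?P (insert (first_gap S) S)) (fa_word (tau_list k S)))
    else 0"
  have "fa_word (tau_list k {1..k} @ replicate (Suc r) (X 1)) =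
      fa_mul (fa_word (tau_list k {1..k} @ replicate r (X 1))) (fa_word [X 1] :: (onh_gen, 'k) fa)"
    by (simp add: replicate_append_same)
  also have "fa_cong (onh_rels n l) \<dots>
      (fa_mul (\<Sum>S\<in>Pow {1..k}. fa_mul (?P S) (fa_word (tau_list k S))) (fa_word [X 1]))"
    using fa_cong_mul_words[OF Suc.IH, where u = "[]" and v = "[X 1]"] by simp
  also have "\<dots> = (\<Sum>S\<in>Pow {1..k}. fa_mul (?P S) (fa_word (tau_list k S @ [X 1])))"
    by (simp add: fa_mul_sum_left fa_mul_word_assoc_right)
  also have "fa_cong (onh_rels n l) \<dots> (\<Sum>S\<in>Pow {1..k}. fa_mul (?P S) (tau_x1_expansion k S))"
    using assms
    by (intro fa_cong_sum fa_cong_mul_left[OF fa_over_subst_x[OF expansion_poly_over]] tau_x1_cong) auto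
  also have "\<dots> = (\<Sum>S\<in>Pow {1..k}. ?A S) + (\<Sum>S\<in>Pow {1..k}. \<Sum>j\<in>{1..<first_gap S}.
      fa_smul ((-1)^(j - 1)) (fa_mul (?P S) (fa_word (tau_list k (S - {j})))))"
    by (simp add: tau_x1_expansion_def fa_mul_add_right fa_mul_sum_right fa_mul_smul_right sum.distrib)
  also have "\<dots> = (\<Sum>S\<in>Pow {1..k}. ?A S + ?B S)"
    using sum_first_gap_reindex[where F = "\<lambda>T j S. fa_smul ((-1)^(j - 1)) (fa_mul (?P S) (fa_word (tau_list k T)))"]
    by (simp add: sum.distrib)
  also have "fa_cong (onh_rels n l) \<dots>
      (\<Sum>S\<in>Pow {1..k}. fa_mul (subst_x (expansion_poly k (Suc r) S)) (fa_word (tau_list k S)))"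
    using assms by (intro fa_cong_sum fa_cong_sym[OF expansion_poly_Suc_tau_cong]) auto
  finally show ?case .
qed

lemma expansion_in_cyclotomic_ideal:
  assumes "k < n"
  shows "(\<Sum>S\<in>Pow {1..k}. fa_mul (subst_x (expansion_poly k l S)) (fa_word (tau_list k S)))
    \<in> fa_ideal (onh_rels n l :: (onh_gen, 'k::field) fa set)"
proof -
  have "fa_cong (onh_rels n l)
      (\<Sum>S\<in>Pow {1..k}. fa_mul (subst_x (expansion_poly k l S)) (fa_word (tau_list k S)))
      (fa_word (tau_list k {1..k} @ replicate l (X 1)) :: (onh_gen, 'k) fa)"
    by (rule fa_cong_sym[OF tau_x1_power_expansion[OF assms]])
  also have "fa_cong (onh_rels n l) \<dots> 0"
    by (rule onh_cyclotomic)
  finally show ?thesis by (simp add: fa_cong_0_iff)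
qed

section \<open>The leading coefficient\<close>

definition unit_leading_poly :: "nat \<Rightarrow> nat \<Rightarrow> (nat, int) fa \<Rightarrow> bool" where
  "unit_leading_poly k D g \<longleftrightarrow>
    (\<exists>c. (\<forall>j. skpol k (c j)) \<and>
      skpol_eq g (fa_sum {..D} (\<lambda>j. fa_mul (c j) (fa_pow (fa_word [k + 1]) j))) \<and>
      (\<exists>d. skpol k d \<and> skpol_eq (fa_mul (c D) d) fa_one \<and> skpol_eq (fa_mul d (c D)) fa_one))"

lemma skpol_eq_refl: "skpol_eq p p"
  by (simp add: skpol_eq_def fa_diff_eq_minus fa_ideal_0)

lemma expansion_poly_eq_truncation:
  assumes "S \<subseteq> {1..k}" "k \<le> r"
  shows "expansion_poly k r S =
    fa_sum {..r - k + card S} (\<lambda>j. fa_mul (expansion_coeff k r S j) (fa_pow (fa_word [k + 1]) j))"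
proof -
  have "card S \<le> k" using card_mono[OF _ assms(1)] by simp
  then show ?thesis
    unfolding expansion_poly_def fa_sum_eq_sum
    using assms by (intro sum.mono_neutral_right) (auto simp: expansion_coeff_eq_0)
qed

lemma expansion_poly_unit_leading:
  assumes S: "S \<subseteq> {1..k}" and "k \<le> l"
  shows "unit_leading_poly k (l - k + card S) (expansion_poly k l S)"
proof -
  obtain s where s: "s * s = 1" and lead: "expansion_coeff k l S (l - k + card S) = fa_smul s fa_one"
    using expansion_coeff_leading[OF S, of l] \<open>k \<le> l\<close> by auto
  have inverse: "fa_mul (fa_smul s fa_one) (fa_smul s fa_one) = (fa_one :: (nat, int) fa)"
    by (simp add: fa_mul_smul_left fa_mul_smul_right fa_smul_smul s fa_one_def)
  show ?thesis
    unfolding unit_leading_poly_def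
  proof (intro exI[of _ "expansion_coeff k l S"] exI[of _ "fa_smul s fa_one"] conjI allI)
    show "skpol k (expansion_coeff k l S j)" for j
      unfolding skpol_def by (rule expansion_coeff_over[OF S])
    show "skpol k (fa_smul s fa_one)"
      unfolding skpol_def fa_one_def by (intro fa_over_smul fa_over_word) simp
  qed (simp_all only: lead inverse expansion_poly_eq_truncation[OF S \<open>k \<le> l\<close>] skpol_eq_refl)
qed

section \<open>Translating between bit lists and subsets\<close>

text \<open>Since \<open>e = [e\<^sub>k, \<dots>, e\<^sub>1]\<close>, the entry \<open>e ! (k - i)\<close> is \<open>e\<^sub>i\<close>.\<close>

definition set_of_bits :: "nat \<Rightarrow> bool list \<Rightarrow> nat set" where
  "set_of_bits k e = {i \<in> {1..k}. e ! (k - i)}"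

lemma set_of_bits_subset: "set_of_bits k e \<subseteq> {1..k}"
  by (auto simp: set_of_bits_def)

lemma tau_list_conv_concat:
  "tau_list k S = concat (map (\<lambda>p. if k - p \<in> S then [Tau (k - p)] else []) [0..<k])"
proof (induction k)
  case (Suc k)
  have "[0..<Suc k] = 0 # map Suc [0..<k]" by (simp add: upt_conv_Cons map_Suc_upt)
  then show ?case using Suc.IH by (simp add: comp_def del: upt_Suc diff_Suc_Suc) (simp only: diff_Suc_Suc)
qed simp

lemma tau_word_eq: "tau_word k e = fa_word (tau_list k (set_of_bits k e))"
  unfolding tau_word_def tau_list_conv_concat
  by (rule arg_cong[where f = fa_word], rule arg_cong[where f = concat], rule map_cong)
    (auto simp: set_of_bits_def)

lemma len_e_eq_card:
  assumes "length e = k"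
  shows "len_e e = card (set_of_bits k e)"
proof -
  have "len_e e = card {i. i < k \<and> e ! i}"
    unfolding len_e_def using assms by (simp add: length_filter_conv_card)
  also have "\<dots> = card ((\<lambda>i. k - i) ` {i. i < k \<and> e ! i})"
    by (subst card_image) (auto simp: inj_on_def)
  also have "(\<lambda>i. k - i) ` {i. i < k \<and> e ! i} = set_of_bits k e"
  proof
    show "(\<lambda>i. k - i) ` {i. i < k \<and> e ! i} \<subseteq> set_of_bits k e" by (auto simp: set_of_bits_def)
    show "set_of_bits k e \<subseteq> (\<lambda>i. k - i) ` {i. i < k \<and> e ! i}"
    proof
      fix x assume "x \<in> set_of_bits k e"
      then show "x \<in> (\<lambda>i. k - i) ` {i. i < k \<and> e ! i}"
        by (intro image_eqI[of _ _ "k - x"]) (auto simp: set_of_bits_def)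
    qed
  qed
  finally show ?thesis .
qed

lemma bij_betw_set_of_bits: "bij_betw (set_of_bits k) {e. length e = k} (Pow {1..k})"
proof (rule bij_betw_byWitness[where f' = "\<lambda>S. map (\<lambda>p. k - p \<in> S) [0..<k]"])
  show "\<forall>e\<in>{e. length e = k}. map (\<lambda>p. k - p \<in> set_of_bits k e) [0..<k] = e"
    by (auto intro!: nth_equalityI simp: set_of_bits_def)
  show "\<forall>S\<in>Pow {1..k}. set_of_bits k (map (\<lambda>p. k - p \<in> S) [0..<k]) = S"
    by (auto simp: set_of_bits_def)
qed (auto simp: set_of_bits_def)

theorem lemma4p8:
  fixes l n k :: nat
  assumes "n \<le> l" and "1 \<le> k" and "k < n" and "(2::'k::field) \<noteq> 0"
  shows "\<exists>g :: bool list \<Rightarrow> (nat, int) fa.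
    (\<forall>e. length e = k \<longrightarrow>
       skpol (k + 1) (g e) \<and>
       (let D = l - k + len_e e in
        \<exists>c :: nat \<Rightarrow> (nat, int) fa.
          (\<forall>j. skpol k (c j)) \<and>
          skpol_eq (g e) (fa_sum {..D} (\<lambda>j. fa_mul (c j) (fa_pow (fa_word [k + 1]) j))) \<and>
          (\<exists>d. skpol k d \<and> skpol_eq (fa_mul (c D) d) fa_one \<and> skpol_eq (fa_mul d (c D)) fa_one))) \<and>
    onhl_zero n l
      (fa_sum {e. length e = k} (\<lambda>e. fa_mul (subst_x (g e)) (tau_word k e))
        :: (onh_gen, 'k) fa)"
proof -
  let ?g = "\<lambda>e. expansion_poly k l (set_of_bits k e)"
  have "skpol (k + 1) (?g e) \<and> unit_leading_poly k (l - k + len_e e) (?g e)" if "length e = k" for e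
    using expansion_poly_over[OF set_of_bits_subset] expansion_poly_unit_leading[OF set_of_bits_subset] assms
    unfolding skpol_def len_e_eq_card[OF that] by simp
  moreover have "onhl_zero n l (fa_sum {e. length e = k} (\<lambda>e. fa_mul (subst_x (?g e)) (tau_word k e))
      :: (onh_gen, 'k) fa)"
  proof -
    have "fa_sum {e. length e = k} (\<lambda>e. fa_mul (subst_x (?g e)) (tau_word k e)) =
        (\<Sum>S\<in>Pow {1..k}. fa_mul (subst_x (expansion_poly k l S)) (fa_word (tau_list k S)) :: (onh_gen, 'k) fa)"
      unfolding fa_sum_eq_sum tau_word_eq by (rule sum.reindex_bij_betw[OF bij_betw_set_of_bits])
    then show ?thesis
      unfolding onhl_zero_def using expansion_in_cyclotomic_ideal[OF assms(3)] by simp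
  qed
  ultimately show ?thesis unfolding unit_leading_poly_def Let_def by (intro exI[of _ ?g]) blast
qed

end
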